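(* For all real $h,t$ with $0<h<t<1$, $$\lim_{k \to \infty} \sum_{n=0}^{\infty} B^n_k(t;h) = \frac{1-h}{t-h},$$ where the limit is over nonnegative integers $k$.
   Context: For $h\ge 0$, the $h$-Bernstein polynomials are $$B^n_k(t;h) = \binom{n}{k}\frac{\prod_{i=0}^{k-1}(t+ih)\prod_{i=0}^{n-k-1}(1-t+ih)}{\prod_{i=0}^{n-1}(1+ih)}$$ for integers $0\le k\le n$ (empty products equal $1$), and $B^n_k(t;h)=0$ for $n<k$. *)

theory Defs
  imports "HOL-Analysis.Analysis"
begin

definition hBernstein :: "nat \<Rightarrow> nat \<Rightarrow> real \<Rightarrow> real \<Rightarrow> real" where
  "hBernstein n k t h =
     (if n < k then 0
      else real (n choose k) *
           ((\<Prod>i<k. t + real i * h) * (\<Prod>i<n - k. 1 - t + real i * h))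
           / (\<Prod>i<n. 1 + real i * h))"

end

theory Submission
  imports Defs
begin

(* The h-Bernstein polynomials satisfy the recurrence
     (k+1) B^(n+1)_(k+1) + (n+1-k) B^(n+1)_k = (n+1) B^n_k,
   which telescopes to
     (k+1) (SUM n<=N. B^n_(k+1)) = (k+1) (SUM n<=N. B^n_k) - (N+1) B^N_k,
   and for k = 0 one has (t-h) (SUM n<=N. B^n_0) = (1-h) - (1-t+N h) B^N_0.
   In both identities the defect is nonnegative, convergent, and at most (N+1) times
   the N-th term of a summable series; as the harmonic series diverges, it tends to 0.
   So every series SUM n. B^n_k equals (1-h)/(t-h), and the limit in k is that of a
   constant sequence. *)

lemma convergent_le_Suc_mult_summable_imp_LIMSEQ_zero:
  fixes f g :: "nat \<Rightarrow> real"
  assumes "summable f" "convergent g"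
    and g_nonneg: "\<And>n. 0 \<le> g n" and g_le: "\<And>n. g n \<le> real (Suc n) * f n"
  shows "g \<longlonglongrightarrow> 0"
proof -
  from \<open>convergent g\<close> obtain L where g: "g \<longlonglongrightarrow> L"
    by (auto simp: convergent_def)
  have "L \<le> 0"
  proof (rule ccontr)
    assume "\<not> L \<le> 0"
    then have "eventually (\<lambda>n. L / 2 < g n) sequentially"
      by (intro order_tendstoD(1)[OF g]) linarith
    then have "eventually (\<lambda>n. norm (inverse (real (Suc n))) \<le> 2 / L * f n) sequentially"
    proof (rule eventually_mono)
      fix n assume "L / 2 < g n"
      with g_le[of n] \<open>\<not> L \<le> 0\<close> show "norm (inverse (real (Suc n))) \<le> 2 / L * f n"
        by (simp add: field_simps)
    qed
    then have "summable (\<lambda>n. inverse (real (Suc n)))"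
      by (rule summable_comparison_test_ev) (intro summable_mult \<open>summable f\<close>)
    then show False
      using not_summable_harmonic[where 'a=real] summable_Suc_iff[of "\<lambda>n. inverse (real n)"] by simp
  qed
  moreover have "0 \<le> L"
    using g g_nonneg by (intro LIMSEQ_le_const) auto
  ultimately show ?thesis using g by simp
qed

lemma hBernstein_nonneg:
  assumes "0 \<le> h" "0 \<le> t" "t \<le> 1"
  shows "0 \<le> hBernstein n k t h"
  using assms unfolding hBernstein_def
  by (auto intro!: prod_nonneg mult_nonneg_nonneg divide_nonneg_nonneg)

lemma hBernstein_Suc_Suc:
  assumes "0 \<le> h"
  shows "real (Suc k) * (1 + real m * h) * hBernstein (Suc m) (Suc k) t h
       = real (Suc m) * (t + real k * h) * hBernstein m k t h"
proof (cases "k \<le> m")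
  case True
  define A where "A = (\<Prod>i<k. t + real i * h) * (\<Prod>i<m - k. 1 - t + real i * h)"
  define D where "D = (\<Prod>i<m. 1 + real i * h)"
  have pos: "0 < 1 + real m * h" using assms by (simp add: add_pos_nonneg)
  have binom: "real (Suc k) * real (Suc m choose Suc k) = real (Suc m) * real (m choose k)"
    by (metis Suc_times_binomial_eq mult.commute of_nat_mult)
  have "hBernstein (Suc m) (Suc k) t h
      = real (Suc m choose Suc k) * (t + real k * h) * A / (D * (1 + real m * h))"
    using True by (simp add: hBernstein_def A_def D_def del: binomial_Suc_Suc)
  then have "real (Suc k) * (1 + real m * h) * hBernstein (Suc m) (Suc k) t h
      = real (Suc k) * real (Suc m choose Suc k) * (t + real k * h) * A / D"
    using pos by (simp del: binomial_Suc_Suc)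
  also have "\<dots> = real (Suc m) * (t + real k * h) * (real (m choose k) * A / D)"
    by (simp only: binom) simp
  also have "real (m choose k) * A / D = hBernstein m k t h"
    using True by (simp add: hBernstein_def A_def D_def)
  finally show ?thesis .
qed (simp add: hBernstein_def)

lemma hBernstein_Suc:
  assumes "0 \<le> h"
  shows "(real m + 1 - real k) * (1 + real m * h) * hBernstein (Suc m) k t h
       = real (Suc m) * (1 - t + (real m - real k) * h) * hBernstein m k t h"
proof (cases "k \<le> m")
  case True
  define A where "A = (\<Prod>i<k. t + real i * h) * (\<Prod>i<m - k. 1 - t + real i * h)"
  define D where "D = (\<Prod>i<m. 1 + real i * h)"
  have pos: "0 < 1 + real m * h" using assms by (simp add: add_pos_nonneg)
  have binom: "(real m + 1 - real k) * real (Suc m choose k) = real (Suc m) * real (m choose k)"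
  proof -
    have "real (Suc m - k) * real (Suc m choose k) = real (Suc m) * real (m choose k)"
      by (metis binomial_absorb_comp diff_Suc_1 of_nat_mult)
    moreover have "real (Suc m - k) = real m + 1 - real k"
      using True by (simp add: of_nat_diff)
    ultimately show ?thesis by simp
  qed
  have "hBernstein (Suc m) k t h
      = real (Suc m choose k) * (1 - t + (real m - real k) * h) * A / (D * (1 + real m * h))"
    using True by (simp add: hBernstein_def A_def D_def Suc_diff_le of_nat_diff del: binomial_Suc_Suc)
  then have "(real m + 1 - real k) * (1 + real m * h) * hBernstein (Suc m) k t h
      = (real m + 1 - real k) * real (Suc m choose k) * (1 - t + (real m - real k) * h) * A / D"
    using pos by (simp del: binomial_Suc_Suc)
  also have "\<dots> = real (Suc m) * (1 - t + (real m - real k) * h) * (real (m choose k) * A / D)"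
    by (simp only: binom) simp
  also have "real (m choose k) * A / D = hBernstein m k t h"
    using True by (simp add: hBernstein_def A_def D_def)
  finally show ?thesis .
qed (auto simp: hBernstein_def not_le)

lemma hBernstein_recurrence:
  assumes "0 \<le> h"
  shows "real (Suc k) * hBernstein (Suc m) (Suc k) t h + (real m + 1 - real k) * hBernstein (Suc m) k t h
       = real (Suc m) * hBernstein m k t h"
proof -
  have pos: "0 < 1 + real m * h" using assms by (simp add: add_pos_nonneg)
  have "(1 + real m * h) * (real (Suc k) * hBernstein (Suc m) (Suc k) t h
          + (real m + 1 - real k) * hBernstein (Suc m) k t h)
      = real (Suc m) * ((t + real k * h) + (1 - t + (real m - real k) * h)) * hBernstein m k t h"
    using hBernstein_Suc_Suc[OF assms, of k m t] hBernstein_Suc[OF assms, of m k t]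
    by (simp only: algebra_simps)
  also have "\<dots> = (1 + real m * h) * (real (Suc m) * hBernstein m k t h)"
    by (simp add: algebra_simps)
  finally show ?thesis using pos by simp
qed

lemma hBernstein_0_Suc:
  assumes "0 \<le> h"
  shows "(1 + real m * h) * hBernstein (Suc m) 0 t h = (1 - t + real m * h) * hBernstein m 0 t h"
proof -
  have "real (Suc m) * ((1 + real m * h) * hBernstein (Suc m) 0 t h)
      = real (Suc m) * ((1 - t + real m * h) * hBernstein m 0 t h)"
    using hBernstein_Suc[OF assms, of m 0 t] by (simp add: algebra_simps)
  then show ?thesis by (simp only: mult_cancel_left of_nat_eq_0_iff nat.simps simp_thms)
qed

lemma hBernstein_0_partial_sum:
  assumes "0 \<le> h"
  shows "(t - h) * (\<Sum>n\<le>N. hBernstein n 0 t h) = (1 - h) - (1 - t + real N * h) * hBernstein N 0 t h"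
proof (induction N)
  case 0
  show ?case by (simp add: hBernstein_def)
next
  case (Suc N)
  with hBernstein_0_Suc[OF assms, of N t] show ?case by (simp add: algebra_simps)
qed

lemma hBernstein_Suc_partial_sum:
  assumes "0 \<le> h"
  shows "real (Suc k) * (\<Sum>n\<le>N. hBernstein n (Suc k) t h)
       = real (Suc k) * (\<Sum>n\<le>N. hBernstein n k t h) - real (Suc N) * hBernstein N k t h"
proof (induction N)
  case 0
  show ?case by (cases k) (simp_all add: hBernstein_def)
next
  case (Suc N)
  with hBernstein_recurrence[OF assms, of k N t] show ?case by (simp add: algebra_simps)
qed

lemma hBernstein_0_sums:
  assumes "0 \<le> h" "h < t" "t \<le> 1"
  shows "(\<lambda>n. hBernstein n 0 t h) sums ((1 - h) / (t - h))"
proof -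
  define C where "C = (1 - h) / (t - h)"
  define w where "w N = (1 - t + real N * h) / (t - h) * hBernstein N 0 t h" for N
  have nonneg: "0 \<le> hBernstein n 0 t h" for n
    using assms by (intro hBernstein_nonneg) auto
  have partial: "(\<Sum>n\<le>N. hBernstein n 0 t h) = C - w N" for N
  proof -
    have "(\<Sum>n\<le>N. hBernstein n 0 t h) = ((1 - h) - (1 - t + real N * h) * hBernstein N 0 t h) / (t - h)"
      using hBernstein_0_partial_sum[OF \<open>0 \<le> h\<close>, of t N] \<open>h < t\<close>
      by (simp add: eq_divide_eq mult.commute)
    then show ?thesis by (simp add: C_def w_def diff_divide_distrib)
  qed
  have w_nonneg: "0 \<le> w N" for N
    unfolding w_def using assms nonneg by (intro mult_nonneg_nonneg divide_nonneg_nonneg) auto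
  have "summable (\<lambda>n. hBernstein n 0 t h)"
    using nonneg partial w_nonneg by (intro bounded_imp_summable[where B = C]) auto
  then have "(\<lambda>N. C - w N) \<longlonglongrightarrow> (\<Sum>n. hBernstein n 0 t h)"
    using summable_sums[of "\<lambda>n. hBernstein n 0 t h"] by (simp add: sums_def_le partial)
  from tendsto_diff[OF tendsto_const this, of C] have "convergent w"
    by (auto simp: convergent_def)
  moreover have "w N \<le> real (Suc N) * (hBernstein N 0 t h / (t - h))" for N
  proof -
    have "1 - t + real N * h \<le> real (Suc N)"
      using assms mult_left_le[of h "real N"] by simp
    moreover have "0 \<le> hBernstein N 0 t h / (t - h)"
      using assms nonneg[of N] by simp
    ultimately show ?thesis
      unfolding w_def by (metis mult_right_mono times_divide_eq_left times_divide_eq_right)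
  qed
  ultimately have "w \<longlonglongrightarrow> 0"
    using w_nonneg \<open>summable (\<lambda>n. hBernstein n 0 t h)\<close>
    by (intro convergent_le_Suc_mult_summable_imp_LIMSEQ_zero[of "\<lambda>n. hBernstein n 0 t h / (t - h)"]
        summable_divide)
  then have "(\<lambda>N. C - w N) \<longlonglongrightarrow> C"
    using tendsto_diff[OF tendsto_const, of w 0 sequentially C] by simp
  then show ?thesis
    unfolding sums_def_le partial C_def .
qed

lemma hBernstein_Suc_sums:
  assumes "0 \<le> h" "0 \<le> t" "t \<le> 1"
    and sums_k: "(\<lambda>n. hBernstein n k t h) sums C"
  shows "(\<lambda>n. hBernstein n (Suc k) t h) sums C"
proof -
  define d where "d N = real (Suc N) / real (Suc k) * hBernstein N k t h" for N
  have nonneg: "0 \<le> hBernstein n j t h" for n j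
    using assms by (intro hBernstein_nonneg)
  have partial: "(\<Sum>n\<le>N. hBernstein n (Suc k) t h) = (\<Sum>n\<le>N. hBernstein n k t h) - d N" for N
    using hBernstein_Suc_partial_sum[OF \<open>0 \<le> h\<close>, of k t N]
    by (simp add: d_def field_simps del: of_nat_Suc)
  have d_nonneg: "0 \<le> d N" for N
    unfolding d_def using nonneg by simp
  have partial_k_le: "(\<Sum>n\<le>N. hBernstein n k t h) \<le> C" for N
    using sums_k nonneg by (metis sums_unique sums_summable sum_le_suminf finite_atMost)
  have "(\<Sum>n\<le>N. hBernstein n (Suc k) t h) \<le> C" for N
    using partial_k_le[of N] partial[of N] d_nonneg[of N] by linarith
  then have "summable (\<lambda>n. hBernstein n (Suc k) t h)"
    using nonneg by (intro bounded_imp_summable[where B = C])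
  then have "(\<lambda>N. (\<Sum>n\<le>N. hBernstein n k t h) - d N) \<longlonglongrightarrow> (\<Sum>n. hBernstein n (Suc k) t h)"
    using summable_sums by (simp add: sums_def_le flip: partial)
  from tendsto_diff[OF sums_k[unfolded sums_def_le] this] have "convergent d"
    by (auto simp: convergent_def)
  moreover have "d N \<le> real (Suc N) * hBernstein N k t h" for N
  proof -
    have "d N = real (Suc N) * hBernstein N k t h * (1 / real (Suc k))"
      by (simp add: d_def)
    also have "\<dots> \<le> real (Suc N) * hBernstein N k t h"
      by (rule mult_left_le) (simp_all add: nonneg)
    finally show ?thesis .
  qed
  ultimately have "d \<longlonglongrightarrow> 0"
    using d_nonneg sums_summable[OF sums_k]
    by (intro convergent_le_Suc_mult_summable_imp_LIMSEQ_zero[of "\<lambda>n. hBernstein n k t h"])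
  then have "(\<lambda>N. (\<Sum>n\<le>N. hBernstein n k t h) - d N) \<longlonglongrightarrow> C - 0"
    using sums_k unfolding sums_def_le by (intro tendsto_diff)
  then show ?thesis
    unfolding sums_def_le partial by simp
qed

lemma hBernstein_sums:
  assumes "0 \<le> h" "h < t" "t \<le> 1"
  shows "(\<lambda>n. hBernstein n k t h) sums ((1 - h) / (t - h))"
proof (induction k)
  case 0
  show ?case using assms by (rule hBernstein_0_sums)
next
  case (Suc k)
  show ?case using assms Suc by (intro hBernstein_Suc_sums) auto
qed

theorem mainTheorem10:
  fixes h t :: real
  assumes "0 < h" "h < t" "t < 1"
  shows "(\<forall>k. summable (\<lambda>n. hBernstein n k t h)) \<and>
         (\<lambda>k. \<Sum>n. hBernstein n k t h) \<longlonglongrightarrow> (1 - h) / (t - h)"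
proof -
  have sums: "(\<lambda>n. hBernstein n k t h) sums ((1 - h) / (t - h))" for k
    using assms by (intro hBernstein_sums) auto
  have "(\<Sum>n. hBernstein n k t h) = (1 - h) / (t - h)" for k
    using sums by (rule sums_unique[symmetric])
  then show ?thesis
    using sums_summable[OF sums] by simp
qed

end
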